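(* Let $E$ be any graph, let $V\subseteq E^0$, and let $H\subseteq E^0$ be a hereditary set such that $\overline{V}\subseteq H\subseteq R(T(V))$. For $v\in H$, let $P_v(T(V))$ be the set of paths of $E$ originating at $v$ and terminating at a vertex of $T(V)$ such that no vertex of the path, except its range, lies in $T(V)$. Then the following are equivalent: (1) $H=\overline{V}$; (2) the set $H\setminus T(V)$ contains no infinite emitters, and every infinite path all of whose vertices lie in $H$ contains a vertex of $T(V)$; (3) the set $P_v(T(V))$ is finite for every $v\in H$.
   Context: A (directed) graph $E=(E^0,E^1,\mathbf{s},\mathbf{r})$ has vertex set $E^0$, edge set $E^1$ (of arbitrary cardinality) and source and range maps $\mathbf{s},\mathbf{r}:E^1\to E^0$. A sink is a vertex emitting no edges, an infinite emitter is a vertex emitting infinitely many edges, and a vertex is regular if it is neither. A path is a single vertex or a finite sequence of edges $e_1\dots e_n$ with $\mathbf{r}(e_i)=\mathbf{s}(e_{i+1})$; an infinite path is an infinite such sequence; $p^0$ denotes the set of vertices on a (finite or infinite) path $p$. Write $u\geq v$ if there is a path from $u$ to $v$. For $V\subseteq E^0$, $T(V)=\{u\in E^0: v\geq u \text{ for some } v\in V\}$ and $R(V)=\{u\in E^0: u\geq v\text{ for some }v\in V\}$. A set $H\subseteq E^0$ is hereditary if $T(H)\subseteq H$, and saturated if every regular vertex $v$ with $\mathbf{r}(\mathbf{s}^{-1}(v))\subseteq H$ lies in $H$. For $V\subseteq E^0$, $\overline{V}$ denotes the smallest hereditary and saturated set containing $V$ (equivalently, the smallest saturated set containing $T(V)$).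 *)

theory Defs
  imports Main
begin

definition graph :: "'v set \<Rightarrow> 'e set \<Rightarrow> ('e \<Rightarrow> 'v) \<Rightarrow> ('e \<Rightarrow> 'v) \<Rightarrow> bool" where
  "graph E0 E1 s r \<longleftrightarrow> s ` E1 \<subseteq> E0 \<and> r ` E1 \<subseteq> E0"

text \<open>A finite path is represented as a pair (v, es): its source vertex v and its list of edges es.
  The pair (v, []) is the trivial path consisting of the vertex v.\<close>

definition is_path :: "'v set \<Rightarrow> 'e set \<Rightarrow> ('e \<Rightarrow> 'v) \<Rightarrow> ('e \<Rightarrow> 'v) \<Rightarrow> 'v \<times> 'e list \<Rightarrow> bool" where
  "is_path E0 E1 s r p \<longleftrightarrow> fst p \<in> E0 \<and> set (snd p) \<subseteq> E1 \<and>
     (snd p \<noteq> [] \<longrightarrow> s (hd (snd p)) = fst p) \<and>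
     (\<forall>i. Suc i < length (snd p) \<longrightarrow> r (snd p ! i) = s (snd p ! Suc i))"

definition path_range :: "('e \<Rightarrow> 'v) \<Rightarrow> 'v \<times> 'e list \<Rightarrow> 'v" where
  "path_range r p = (if snd p = [] then fst p else r (last (snd p)))"

definition path_verts :: "('e \<Rightarrow> 'v) \<Rightarrow> 'v \<times> 'e list \<Rightarrow> 'v set" where
  "path_verts r p = insert (fst p) (r ` set (snd p))"

definition reaches :: "'v set \<Rightarrow> 'e set \<Rightarrow> ('e \<Rightarrow> 'v) \<Rightarrow> ('e \<Rightarrow> 'v) \<Rightarrow> 'v \<Rightarrow> 'v \<Rightarrow> bool" where
  "reaches E0 E1 s r u w \<longleftrightarrow> (\<exists>p. is_path E0 E1 s r p \<and> fst p = u \<and> path_range r p = w)"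

definition tree :: "'v set \<Rightarrow> 'e set \<Rightarrow> ('e \<Rightarrow> 'v) \<Rightarrow> ('e \<Rightarrow> 'v) \<Rightarrow> 'v set \<Rightarrow> 'v set" where
  "tree E0 E1 s r V = {u \<in> E0. \<exists>v\<in>V. reaches E0 E1 s r v u}"

definition rtree :: "'v set \<Rightarrow> 'e set \<Rightarrow> ('e \<Rightarrow> 'v) \<Rightarrow> ('e \<Rightarrow> 'v) \<Rightarrow> 'v set \<Rightarrow> 'v set" where
  "rtree E0 E1 s r V = {u \<in> E0. \<exists>v\<in>V. reaches E0 E1 s r u v}"

definition emits :: "'e set \<Rightarrow> ('e \<Rightarrow> 'v) \<Rightarrow> 'v \<Rightarrow> 'e set" where
  "emits E1 s v = {e \<in> E1. s e = v}"

definition infinite_emitter :: "'v set \<Rightarrow> 'e set \<Rightarrow> ('e \<Rightarrow> 'v) \<Rightarrow> 'v \<Rightarrow> bool" where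
  "infinite_emitter E0 E1 s v \<longleftrightarrow> v \<in> E0 \<and> infinite (emits E1 s v)"

definition regular :: "'v set \<Rightarrow> 'e set \<Rightarrow> ('e \<Rightarrow> 'v) \<Rightarrow> 'v \<Rightarrow> bool" where
  "regular E0 E1 s v \<longleftrightarrow> v \<in> E0 \<and> emits E1 s v \<noteq> {} \<and> finite (emits E1 s v)"

definition hereditary :: "'v set \<Rightarrow> 'e set \<Rightarrow> ('e \<Rightarrow> 'v) \<Rightarrow> ('e \<Rightarrow> 'v) \<Rightarrow> 'v set \<Rightarrow> bool" where
  "hereditary E0 E1 s r H \<longleftrightarrow> tree E0 E1 s r H \<subseteq> H"

definition saturated :: "'v set \<Rightarrow> 'e set \<Rightarrow> ('e \<Rightarrow> 'v) \<Rightarrow> ('e \<Rightarrow> 'v) \<Rightarrow> 'v set \<Rightarrow> bool" where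
  "saturated E0 E1 s r H \<longleftrightarrow>
     (\<forall>v. regular E0 E1 s v \<and> r ` emits E1 s v \<subseteq> H \<longrightarrow> v \<in> H)"

definition hs_closure :: "'v set \<Rightarrow> 'e set \<Rightarrow> ('e \<Rightarrow> 'v) \<Rightarrow> ('e \<Rightarrow> 'v) \<Rightarrow> 'v set \<Rightarrow> 'v set" where
  "hs_closure E0 E1 s r V =
     \<Inter>{H. V \<subseteq> H \<and> H \<subseteq> E0 \<and> hereditary E0 E1 s r H \<and> saturated E0 E1 s r H}"

definition is_inf_path :: "'e set \<Rightarrow> ('e \<Rightarrow> 'v) \<Rightarrow> ('e \<Rightarrow> 'v) \<Rightarrow> (nat \<Rightarrow> 'e) \<Rightarrow> bool" where
  "is_inf_path E1 s r f \<longleftrightarrow> (\<forall>i. f i \<in> E1 \<and> r (f i) = s (f (Suc i)))"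

definition inf_path_verts :: "('e \<Rightarrow> 'v) \<Rightarrow> ('e \<Rightarrow> 'v) \<Rightarrow> (nat \<Rightarrow> 'e) \<Rightarrow> 'v set" where
  "inf_path_verts s r f = range (s \<circ> f) \<union> range (r \<circ> f)"

text \<open>P_v(X): paths from v ending in X, no vertex of which other than the range
  (i.e. no source of an edge of the path) lies in X.\<close>
definition paths_into :: "'v set \<Rightarrow> 'e set \<Rightarrow> ('e \<Rightarrow> 'v) \<Rightarrow> ('e \<Rightarrow> 'v) \<Rightarrow> 'v \<Rightarrow> 'v set
    \<Rightarrow> ('v \<times> 'e list) set" where
  "paths_into E0 E1 s r v X = {p. is_path E0 E1 s r p \<and> fst p = v \<and> path_range r p \<in> X \<and>
      (\<forall>e\<in>set (snd p). s e \<notin> X)}"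

end

theory Submission imports Defs begin

text \<open>The closure \<open>\<overline>V\<close> is the set generated from \<open>T(V)\<close> by saturation steps, so
  induction along this generation shows that every vertex of it is a regular vertex or lies in
  \<open>T(V)\<close>, that infinite paths leaving it reach \<open>T(V)\<close>, and that only finitely many paths lead
  from it into \<open>T(V)\<close>. Conversely, a vertex of \<open>H - \<overline>V\<close> emits an edge (it reaches \<open>T(V)\<close>);
  without infinite emitters it is regular, so by saturation one of its edges stays in
  \<open>H - \<overline>V\<close>, and iterating yields an infinite path in \<open>H\<close> avoiding \<open>T(V)\<close>. Finally, an infinite
  emitter or an infinite path avoiding \<open>T(V)\<close> gives infinitely many paths into \<open>T(V)\<close>, since
  every vertex of \<open>H\<close> has at least one such path.\<close>

locale dgraph =
  fixes E0 :: "'v set" and E1 :: "'e set" and s r :: "'e \<Rightarrow> 'v"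
  assumes graph: "graph E0 E1 s r"
begin

lemma source_in_E0: "e \<in> E1 \<Longrightarrow> s e \<in> E0" and range_in_E0: "e \<in> E1 \<Longrightarrow> r e \<in> E0"
  using graph unfolding graph_def by auto

definition edge_rel :: "('v \<times> 'v) set" where
  "edge_rel = {(s e, r e) | e. e \<in> E1}"

lemma is_path_Cons_iff:
  "is_path E0 E1 s r (v, e # es) \<longleftrightarrow> e \<in> E1 \<and> s e = v \<and> is_path E0 E1 s r (r e, es)"
proof
  assume p: "is_path E0 E1 s r (v, e # es)"
  then have adj: "\<And>i. Suc i < length (e # es) \<Longrightarrow> r ((e # es) ! i) = s ((e # es) ! Suc i)"
    unfolding is_path_def by auto
  have "es \<noteq> [] \<Longrightarrow> s (hd es) = r e" using adj[of 0] by (cases es) auto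
  moreover have "\<And>i. Suc i < length es \<Longrightarrow> r (es ! i) = s (es ! Suc i)"
    using adj by (metis Suc_less_eq length_Cons nth_Cons_Suc)
  ultimately show "e \<in> E1 \<and> s e = v \<and> is_path E0 E1 s r (r e, es)"
    using p range_in_E0 unfolding is_path_def by auto
next
  assume p: "e \<in> E1 \<and> s e = v \<and> is_path E0 E1 s r (r e, es)"
  have "r ((e # es) ! i) = s ((e # es) ! Suc i)" if "Suc i < length (e # es)" for i
    using p that unfolding is_path_def by (cases i) (auto simp: hd_conv_nth)
  then show "is_path E0 E1 s r (v, e # es)" using p source_in_E0 unfolding is_path_def by auto
qed

lemma path_range_Cons: "path_range r (v, e # es) = path_range r (r e, es)"
  unfolding path_range_def by auto

lemma path_range_in_rtrancl:
  "is_path E0 E1 s r (u, es) \<Longrightarrow> (u, path_range r (u, es)) \<in> edge_rel\<^sup>*"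
proof (induction es arbitrary: u)
  case Nil
  then show ?case by (simp add: path_range_def)
next
  case (Cons e es)
  then have "(u, r e) \<in> edge_rel" "(r e, path_range r (r e, es)) \<in> edge_rel\<^sup>*"
    by (auto simp: is_path_Cons_iff edge_rel_def)
  then show ?case by (simp add: path_range_Cons converse_rtrancl_into_rtrancl)
qed

lemma path_of_rtrancl:
  "(u, w) \<in> edge_rel\<^sup>* \<Longrightarrow> u \<in> E0 \<Longrightarrow> \<exists>es. is_path E0 E1 s r (u, es) \<and> path_range r (u, es) = w"
proof (induction rule: converse_rtrancl_induct)
  case base
  then show ?case by (intro exI[of _ "[]"]) (simp add: is_path_def path_range_def)
next
  case (step y z)
  then obtain e where e: "e \<in> E1" "y = s e" "z = r e" unfolding edge_rel_def by blast
  with step range_in_E0 obtain es where "is_path E0 E1 s r (z, es)" "path_range r (z, es) = w"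
    by blast
  with e show ?case by (intro exI[of _ "e # es"]) (simp add: is_path_Cons_iff path_range_Cons)
qed

lemma rtrancl_in_E0: "(u, w) \<in> edge_rel\<^sup>* \<Longrightarrow> u \<in> E0 \<Longrightarrow> w \<in> E0"
  by (induction rule: rtrancl_induct) (auto simp: edge_rel_def range_in_E0)

lemma reaches_iff_rtrancl: "reaches E0 E1 s r u w \<longleftrightarrow> u \<in> E0 \<and> (u, w) \<in> edge_rel\<^sup>*"
  unfolding reaches_def
  by (metis is_path_def path_range_in_rtrancl prod.collapse path_of_rtrancl fst_conv)

lemma mem_tree_iff: "u \<in> tree E0 E1 s r X \<longleftrightarrow> (\<exists>v\<in>X. v \<in> E0 \<and> (v, u) \<in> edge_rel\<^sup>*)"
  unfolding tree_def reaches_iff_rtrancl using rtrancl_in_E0 by blast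

lemma mem_rtree_iff: "u \<in> rtree E0 E1 s r X \<longleftrightarrow> u \<in> E0 \<and> (\<exists>v\<in>X. (u, v) \<in> edge_rel\<^sup>*)"
  unfolding rtree_def reaches_iff_rtrancl by blast

lemma subset_tree: "X \<subseteq> E0 \<Longrightarrow> X \<subseteq> tree E0 E1 s r X"
  unfolding subset_iff mem_tree_iff by blast

lemma tree_subset_E0: "tree E0 E1 s r X \<subseteq> E0"
  unfolding tree_def by blast

lemma hereditary_iff_edge_closed:
  "hereditary E0 E1 s r H \<longleftrightarrow> (\<forall>e\<in>E1. s e \<in> H \<longrightarrow> r e \<in> H)"
proof
  assume "hereditary E0 E1 s r H"
  then show "\<forall>e\<in>E1. s e \<in> H \<longrightarrow> r e \<in> H"
    unfolding hereditary_def mem_tree_iff edge_rel_def subset_iff by (blast intro: source_in_E0)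
next
  assume closed: "\<forall>e\<in>E1. s e \<in> H \<longrightarrow> r e \<in> H"
  have "(v, u) \<in> edge_rel\<^sup>* \<Longrightarrow> v \<in> H \<Longrightarrow> u \<in> H" for u v
    by (induction rule: rtrancl_induct) (auto simp: edge_rel_def closed)
  then show "hereditary E0 E1 s r H" unfolding hereditary_def by (auto simp: mem_tree_iff)
qed

lemma tree_hereditary: "hereditary E0 E1 s r (tree E0 E1 s r X)"
  unfolding hereditary_iff_edge_closed mem_tree_iff edge_rel_def
  by (blast intro: rtrancl_into_rtrancl)

lemma tree_subset_if_hereditary: "hereditary E0 E1 s r H \<Longrightarrow> X \<subseteq> H \<Longrightarrow> tree E0 E1 s r X \<subseteq> H"
  unfolding hereditary_def tree_def by blast

inductive_set saturation :: "'v set \<Rightarrow> 'v set" for X :: "'v set" where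
  base: "v \<in> X \<Longrightarrow> v \<in> saturation X"
| regular: "regular E0 E1 s v \<Longrightarrow> \<forall>e\<in>emits E1 s v. r e \<in> saturation X \<Longrightarrow> v \<in> saturation X"

lemma saturation_subset_E0: "X \<subseteq> E0 \<Longrightarrow> saturation X \<subseteq> E0"
  by (auto elim: saturation.induct simp: regular_def)

lemma saturation_saturated: "saturated E0 E1 s r (saturation X)"
  unfolding saturated_def by (blast intro: saturation.regular)

lemma saturation_least: "X \<subseteq> S \<Longrightarrow> saturated E0 E1 s r S \<Longrightarrow> saturation X \<subseteq> S"
proof
  fix v assume "v \<in> saturation X" "X \<subseteq> S" "saturated E0 E1 s r S"
  then show "v \<in> S" by induction (auto simp: saturated_def)
qed

lemma saturation_hereditary:
  assumes "hereditary E0 E1 s r X"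
  shows "hereditary E0 E1 s r (saturation X)"
  unfolding hereditary_iff_edge_closed
proof (intro ballI impI)
  fix e assume e: "e \<in> E1" "s e \<in> saturation X"
  from e(2) show "r e \<in> saturation X"
  proof cases
    case base
    then show ?thesis using assms e by (auto simp: hereditary_iff_edge_closed intro: saturation.base)
  next
    case regular
    then show ?thesis using e unfolding emits_def by blast
  qed
qed

lemma hs_closure_eq_saturation:
  assumes "V \<subseteq> E0"
  shows "hs_closure E0 E1 s r V = saturation (tree E0 E1 s r V)"
proof
  have "V \<subseteq> saturation (tree E0 E1 s r V)"
    using subset_tree[OF assms] by (blast intro: saturation.base)
  then show "hs_closure E0 E1 s r V \<subseteq> saturation (tree E0 E1 s r V)"
    unfolding hs_closure_def
    using saturation_subset_E0[OF tree_subset_E0] saturation_hereditary[OF tree_hereditary]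
      saturation_saturated
    by (intro Inter_lower) blast
next
  show "saturation (tree E0 E1 s r V) \<subseteq> hs_closure E0 E1 s r V"
    unfolding hs_closure_def
    by (intro Inter_greatest saturation_least) (auto dest: tree_subset_if_hereditary)
qed

lemma not_infinite_emitter_saturation:
  "v \<in> saturation X \<Longrightarrow> v \<notin> X \<Longrightarrow> \<not> infinite_emitter E0 E1 s v"
  by (erule saturation.cases) (auto simp: regular_def infinite_emitter_def)

lemma inf_path_from_saturation_meets:
  "v \<in> saturation X \<Longrightarrow> is_inf_path E1 s r f \<Longrightarrow> s (f 0) = v \<Longrightarrow> inf_path_verts s r f \<inter> X \<noteq> {}"
proof (induction arbitrary: f rule: saturation.induct)
  case (base v)
  then show ?case unfolding inf_path_verts_def by auto
next
  case (regular v)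
  let ?tail = "\<lambda>i. f (Suc i)"
  have "f 0 \<in> emits E1 s v" using regular.prems unfolding is_inf_path_def emits_def by auto
  moreover have "is_inf_path E1 s r ?tail" "s (?tail 0) = r (f 0)"
    using regular.prems unfolding is_inf_path_def by auto
  ultimately have "inf_path_verts s r ?tail \<inter> X \<noteq> {}" using regular.IH by blast
  moreover have "inf_path_verts s r ?tail \<subseteq> inf_path_verts s r f"
    unfolding inf_path_verts_def by auto
  ultimately show ?case by blast
qed

lemma paths_into_Cons_iff:
  "(v, e # es) \<in> paths_into E0 E1 s r v X \<longleftrightarrow>
     e \<in> E1 \<and> s e = v \<and> v \<notin> X \<and> (r e, es) \<in> paths_into E0 E1 s r (r e) X"
  unfolding paths_into_def by (auto simp: is_path_Cons_iff path_range_Cons)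

lemma paths_into_of_mem: "v \<in> X \<Longrightarrow> paths_into E0 E1 s r v X \<subseteq> {(v, [])}"
proof
  fix p assume "p \<in> paths_into E0 E1 s r v X" "v \<in> X"
  moreover obtain es where "p = (v, es)"
    using \<open>p \<in> paths_into E0 E1 s r v X\<close> unfolding paths_into_def by (cases p) auto
  ultimately show "p \<in> {(v, [])}" by (cases es) (auto simp: paths_into_Cons_iff)
qed

lemma paths_into_of_not_mem:
  assumes "v \<notin> X"
  shows "paths_into E0 E1 s r v X \<subseteq>
    (\<lambda>(e, q). (v, e # snd q)) ` (SIGMA e:emits E1 s v. paths_into E0 E1 s r (r e) X)"
proof
  fix p assume p: "p \<in> paths_into E0 E1 s r v X"
  then obtain es where p_eq: "p = (v, es)" unfolding paths_into_def by (cases p) auto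
  with p assms obtain e es' where "es = e # es'"
    unfolding paths_into_def path_range_def by (cases es) auto
  with p p_eq have "e \<in> emits E1 s v" "(r e, es') \<in> paths_into E0 E1 s r (r e) X"
    by (auto simp: paths_into_Cons_iff emits_def)
  with p_eq \<open>es = e # es'\<close> show "p \<in> (\<lambda>(e, q). (v, e # snd q)) `
      (SIGMA e:emits E1 s v. paths_into E0 E1 s r (r e) X)"
    by (auto intro!: image_eqI[of _ _ "(e, (r e, es'))"])
qed

lemma finite_paths_into_saturation: "v \<in> saturation X \<Longrightarrow> finite (paths_into E0 E1 s r v X)"
proof (induction rule: saturation.induct)
  case (base v)
  then show ?case using paths_into_of_mem finite_subset by blast
next
  case (regular v)
  show ?case
  proof (cases "v \<in> X")
    case True
    then show ?thesis using paths_into_of_mem finite_subset by blast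
  next
    case False
    have "finite (emits E1 s v)" using regular.hyps unfolding regular_def by blast
    with regular.IH show ?thesis by (blast intro: finite_subset[OF paths_into_of_not_mem[OF False]])
  qed
qed

lemma ex_inf_path_if_successor_closed:
  assumes "v \<in> A" and succ: "\<forall>u\<in>A. \<exists>e\<in>E1. s e = u \<and> r e \<in> A"
  shows "\<exists>f. is_inf_path E1 s r f \<and> inf_path_verts s r f \<subseteq> A"
proof -
  obtain g where g: "\<forall>u\<in>A. g u \<in> E1 \<and> s (g u) = u \<and> r (g u) \<in> A"
    using succ by metis
  define x where "x n = ((\<lambda>u. r (g u)) ^^ n) v" for n
  have x_in: "x n \<in> A" for n
    by (induction n) (use assms(1) g in \<open>auto simp: x_def\<close>)
  have x_Suc: "x (Suc n) = r (g (x n))" for n by (simp add: x_def)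
  have "is_inf_path E1 s r (g \<circ> x)" unfolding is_inf_path_def using g x_in x_Suc by auto
  moreover have "inf_path_verts s r (g \<circ> x) \<subseteq> A"
    unfolding inf_path_verts_def using g x_in by auto
  ultimately show ?thesis by blast
qed

lemma subset_saturated_if_inf_paths_meet:
  assumes S: "saturated E0 E1 s r S" "X \<subseteq> S"
    and H: "hereditary E0 E1 s r H" "H \<subseteq> rtree E0 E1 s r X"
    and no_emitter: "\<forall>v\<in>H - X. \<not> infinite_emitter E0 E1 s v"
    and meets: "\<forall>f. is_inf_path E1 s r f \<and> inf_path_verts s r f \<subseteq> H \<longrightarrow> inf_path_verts s r f \<inter> X \<noteq> {}"
  shows "H \<subseteq> S"
proof (rule ccontr)
  assume "\<not> H \<subseteq> S"
  then obtain v where v: "v \<in> H - S" by blast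
  have "\<exists>e\<in>E1. s e = u \<and> r e \<in> H - S" if u: "u \<in> H - S" for u
  proof -
    from u H(2) have "u \<in> rtree E0 E1 s r X" by blast
    then obtain w where w: "u \<in> E0" "w \<in> X" "(u, w) \<in> edge_rel\<^sup>*"
      unfolding mem_rtree_iff by blast
    have "u \<notin> X" using u S(2) by blast
    with w obtain y where "(u, y) \<in> edge_rel" by (auto elim: converse_rtranclE)
    then obtain e0 where "e0 \<in> E1" "s e0 = u" unfolding edge_rel_def by blast
    then have "emits E1 s u \<noteq> {}" unfolding emits_def by blast
    with no_emitter u \<open>u \<notin> X\<close> w(1) have "regular E0 E1 s u"
      unfolding infinite_emitter_def regular_def by blast
    with S(1) u obtain e where "e \<in> emits E1 s u" "r e \<notin> S" unfolding saturated_def by blast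
    with H(1) u show ?thesis unfolding emits_def hereditary_iff_edge_closed by blast
  qed
  with v obtain f where "is_inf_path E1 s r f" "inf_path_verts s r f \<subseteq> H - S"
    using ex_inf_path_if_successor_closed[of v "H - S"] by blast
  with meets S(2) show False by blast
qed

lemma paths_into_nonempty:
  "(u, w) \<in> edge_rel\<^sup>* \<Longrightarrow> w \<in> X \<Longrightarrow> u \<in> E0 \<Longrightarrow> paths_into E0 E1 s r u X \<noteq> {}"
proof (induction rule: converse_rtrancl_induct)
  case base
  then have "(w, []) \<in> paths_into E0 E1 s r w X"
    by (simp add: paths_into_def is_path_def path_range_def)
  then show ?case by blast
next
  case (step y z)
  then obtain e where e: "e \<in> E1" "y = s e" "z = r e" unfolding edge_rel_def by blast
  show ?case
  proof (cases "y \<in> X")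
    case True
    with step have "(y, []) \<in> paths_into E0 E1 s r y X"
      by (simp add: paths_into_def is_path_def path_range_def)
    then show ?thesis by blast
  next
    case False
    from step e range_in_E0 obtain p where "p \<in> paths_into E0 E1 s r z X" by blast
    then have "(z, snd p) \<in> paths_into E0 E1 s r z X"
      by (cases p) (simp add: paths_into_def)
    with e False have "(y, e # snd p) \<in> paths_into E0 E1 s r y X"
      by (simp add: paths_into_Cons_iff)
    then show ?thesis by blast
  qed
qed

context
  fixes H X :: "'v set"
  assumes H_hereditary: "hereditary E0 E1 s r H"
    and H_reaches: "H \<subseteq> rtree E0 E1 s r X"
    and finite_paths: "\<forall>v\<in>H. finite (paths_into E0 E1 s r v X)"
begin

definition path_into :: "'v \<Rightarrow> 'e list" where
  "path_into w = (SOME es. (w, es) \<in> paths_into E0 E1 s r w X)"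

lemma path_into: "w \<in> H \<Longrightarrow> (w, path_into w) \<in> paths_into E0 E1 s r w X"
proof -
  assume "w \<in> H"
  with H_reaches have "w \<in> rtree E0 E1 s r X" by blast
  then obtain t where "w \<in> E0" "t \<in> X" "(w, t) \<in> edge_rel\<^sup>*"
    unfolding mem_rtree_iff by blast
  then obtain p where p: "p \<in> paths_into E0 E1 s r w X" using paths_into_nonempty by blast
  then have "(w, snd p) \<in> paths_into E0 E1 s r w X"
    by (cases p) (simp add: paths_into_def)
  then show ?thesis unfolding path_into_def by (rule someI)
qed

lemma not_infinite_emitter_if_finite_paths_into:
  assumes u: "u \<in> H - X"
  shows "\<not> infinite_emitter E0 E1 s u"
proof -
  define extend where "extend e = (u, e # path_into (r e))" for e
  have "inj_on extend (emits E1 s u)" unfolding inj_on_def extend_def by auto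
  moreover have "extend ` emits E1 s u \<subseteq> paths_into E0 E1 s r u X"
    using u H_hereditary path_into
    by (auto simp: extend_def emits_def paths_into_Cons_iff hereditary_iff_edge_closed)
  ultimately have "finite (emits E1 s u)"
    using u finite_paths finite_subset finite_imageD by blast
  then show ?thesis unfolding infinite_emitter_def by blast
qed

lemma inf_path_meets_if_finite_paths_into:
  assumes f: "is_inf_path E1 s r f" "inf_path_verts s r f \<subseteq> H"
  shows "inf_path_verts s r f \<inter> X \<noteq> {}"
proof
  assume avoids: "inf_path_verts s r f \<inter> X = {}"
  have in_H: "s (f k) \<in> H" "s (f k) \<notin> X" for k
    using f(2) avoids unfolding inf_path_verts_def by auto
  have edge: "f k \<in> E1" "r (f k) = s (f (Suc k))" for k
    using f(1) unfolding is_inf_path_def by auto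
  \<comment> \<open>follow \<open>f\<close> for \<open>n\<close> steps, then leave it along a chosen path into \<open>X\<close>\<close>
  have long_path: "(s (f k), map f [k..<k + n] @ path_into (s (f (k + n))))
      \<in> paths_into E0 E1 s r (s (f k)) X" for n k
  proof (induction n arbitrary: k)
    case 0
    then show ?case using path_into[OF in_H(1)] by simp
  next
    case (Suc n)
    have unroll: "[k..<k + Suc n] = k # [Suc k..<Suc k + n]" by (simp add: upt_conv_Cons)
    show ?case unfolding unroll using Suc.IH[of "Suc k"] edge[of k] in_H(2)[of k]
      by (simp add: paths_into_Cons_iff)
  qed
  have "finite ((length \<circ> snd) ` paths_into E0 E1 s r (s (f 0)) X)"
    using finite_paths in_H(1) by blast
  then obtain M where "\<forall>p\<in>paths_into E0 E1 s r (s (f 0)) X. length (snd p) \<le> M"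
    by (auto simp: finite_nat_set_iff_bounded_le)
  from this long_path[of 0 "Suc M"] show False by fastforce
qed

end

end

theorem lemma2p1:
  fixes E0 :: "'v set" and E1 :: "'e set" and s r :: "'e \<Rightarrow> 'v" and V H :: "'v set"
  assumes "graph E0 E1 s r"
    and "V \<subseteq> E0"
    and "hereditary E0 E1 s r H"
    and "hs_closure E0 E1 s r V \<subseteq> H"
    and "H \<subseteq> rtree E0 E1 s r (tree E0 E1 s r V)"
  shows "(H = hs_closure E0 E1 s r V
      \<longleftrightarrow> (\<forall>v\<in>H - tree E0 E1 s r V. \<not> infinite_emitter E0 E1 s v) \<and>
          (\<forall>f. is_inf_path E1 s r f \<and> inf_path_verts s r f \<subseteq> H
               \<longrightarrow> inf_path_verts s r f \<inter> tree E0 E1 s r V \<noteq> {}))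
    \<and> (H = hs_closure E0 E1 s r V
      \<longleftrightarrow> (\<forall>v\<in>H. finite (paths_into E0 E1 s r v (tree E0 E1 s r V))))"
proof -
  interpret dgraph E0 E1 s r using assms(1) by unfold_locales
  let ?T = "tree E0 E1 s r V"
  let ?no_emitter = "\<forall>v\<in>H - ?T. \<not> infinite_emitter E0 E1 s v"
  let ?paths_meet = "\<forall>f. is_inf_path E1 s r f \<and> inf_path_verts s r f \<subseteq> H
    \<longrightarrow> inf_path_verts s r f \<inter> ?T \<noteq> {}"
  let ?finite_paths = "\<forall>v\<in>H. finite (paths_into E0 E1 s r v ?T)"
  have closure: "hs_closure E0 E1 s r V = saturation ?T"
    using hs_closure_eq_saturation[OF assms(2)] .
  have "?no_emitter \<and> ?paths_meet" if "H = saturation ?T"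
  proof (intro conjI ballI allI impI)
    show "\<not> infinite_emitter E0 E1 s v" if "v \<in> H - ?T" for v
      using not_infinite_emitter_saturation that \<open>H = saturation ?T\<close> by blast
    fix f assume f: "is_inf_path E1 s r f \<and> inf_path_verts s r f \<subseteq> H"
    then have "s (f 0) \<in> saturation ?T" using that unfolding inf_path_verts_def by auto
    with f show "inf_path_verts s r f \<inter> ?T \<noteq> {}" using inf_path_from_saturation_meets by blast
  qed
  moreover have "?finite_paths" if "H = saturation ?T"
    using finite_paths_into_saturation that by blast
  moreover have "H = saturation ?T" if "?no_emitter" "?paths_meet"
  proof -
    have "?T \<subseteq> saturation ?T" by (blast intro: saturation.base)
    from subset_saturated_if_inf_paths_meet[OF saturation_saturated this assms(3,5) that]
    have "H \<subseteq> saturation ?T" .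
    with assms(4) closure show ?thesis by blast
  qed
  moreover have "?no_emitter \<and> ?paths_meet" if ?finite_paths
    using not_infinite_emitter_if_finite_paths_into[OF assms(3,5) that]
      inf_path_meets_if_finite_paths_into[OF assms(3,5) that] by blast
  ultimately show ?thesis unfolding closure by argo
qed

end
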